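(* Let $\gamma\in[0,1)$, $\lambda\ge0$, let $V$ be the value function defined in the context, and let $V_{CQL}$ be the unique bounded fixed point of the CQL Bellman backup $B_{CQL}$ defined in the context. Then $$V(x)-\frac{\lambda}{1-\gamma}\le V_{CQL}(x)\le V(x)-\lambda\quad\text{for all }x\in\mathbb{R}^n.$$
   Context: Setting: States $x\in\mathbb{R}^n$; compact sets $\mathcal{U}\subseteq\mathbb{R}^m$ (controls) and $\mathcal{D}\subseteq\mathbb{R}^\ell$ (disturbances); dynamics $f:\mathbb{R}^n\times\mathcal{U}\times\mathcal{D}\to\mathbb{R}^n$, Lipschitz continuous in the state. For sequences $\mathbf{u}=\{u_t\}_{t\ge0}\subset\mathcal{U}$, $\mathbf{d}=\{d_t\}_{t\ge0}\subset\mathcal{D}$, the trajectory is $\xi_x^{\mathbf{u},\mathbf{d}}(0)=x$, $\xi_x^{\mathbf{u},\mathbf{d}}(t+1)=f(\xi_x^{\mathbf{u},\mathbf{d}}(t),u_t,d_t)$ for $t\in\mathbb{Z}_+$. Let $r,c:\mathbb{R}^n\to\mathbb{R}$ be bounded Lipschitz continuous functions. A map $\phi$ from control sequences to disturbance sequences is a non-anticipative strategy if whenever $u_t=\bar u_t$ for all $t\in\{0,\dots,T\}$, then $\phi(\mathbf{u})_t=\phi(\bar{\mathbf{u}})_t$ for all $t\in\{0,\dots,T\}$; $\Phi$ is the set of all such strategies. Value function: $$V(x)=\inf_{\phi\in\Phi}\ \sup_{\mathbf{u}}\ \sup_{t\in\mathbb{Z}_+}\ \min\Big\{\gamma^t r\big(\xi_x^{\mathbf{u},\phi(\mathbf{u})}(t)\big),\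 \min_{\tau=0,\dots,t}\gamma^\tau c\big(\xi_x^{\mathbf{u},\phi(\mathbf{u})}(\tau)\big)\Big\}$$ (the paper writes $\max_{\mathbf{u}}$ over control sequences). Bellman backup, for bounded $U:\mathbb{R}^n\to\mathbb{R}$: $B[U](x)=\min\{c(x),\max\{r(x),\gamma\max_{u\in\mathcal{U}}\min_{d\in\mathcal{D}}U(f(x,u,d))\}\}$. CQL Bellman backup: $B_{CQL}[U](x)=B[U](x)-\lambda$; this is a $\gamma$-contraction in the sup norm on bounded functions, and $V_{CQL}$ denotes its unique bounded fixed point (the limit of the iteration $V^{(k+1)}=B_{CQL}[V^{(k)}]$ from any bounded initial function). *)

theory Defs
  imports "HOL-Analysis.Analysis"
begin

primrec traj :: "('x \<Rightarrow> 'u \<Rightarrow> 'd \<Rightarrow> 'x) \<Rightarrow> 'x \<Rightarrow> (nat \<Rightarrow> 'u) \<Rightarrow> (nat \<Rightarrow> 'd) \<Rightarrow> nat \<Rightarrow> 'x" where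
  "traj f x u d 0 = x"
| "traj f x u d (Suc t) = f (traj f x u d t) (u t) (d t)"

definition seqs :: "'a set \<Rightarrow> (nat \<Rightarrow> 'a) set" where
  "seqs A = {s. \<forall>t. s t \<in> A}"

definition nonanticipative :: "'u set \<Rightarrow> 'd set \<Rightarrow> ((nat \<Rightarrow> 'u) \<Rightarrow> (nat \<Rightarrow> 'd)) set" where
  "nonanticipative U D = {\<phi>. (\<forall>u\<in>seqs U. \<phi> u \<in> seqs D) \<and>
     (\<forall>u\<in>seqs U. \<forall>u'\<in>seqs U. \<forall>T. (\<forall>t\<le>T. u t = u' t) \<longrightarrow> (\<forall>t\<le>T. \<phi> u t = \<phi> u' t))}"

definition payoff :: "('x \<Rightarrow> 'u \<Rightarrow> 'd \<Rightarrow> 'x) \<Rightarrow> ('x \<Rightarrow> real) \<Rightarrow> ('x \<Rightarrow> real) \<Rightarrow> real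
    \<Rightarrow> 'x \<Rightarrow> (nat \<Rightarrow> 'u) \<Rightarrow> (nat \<Rightarrow> 'd) \<Rightarrow> real" where
  "payoff f r c \<gamma> x u d = (SUP t::nat. min (\<gamma> ^ t * r (traj f x u d t))
      (Min ((\<lambda>\<tau>. \<gamma> ^ \<tau> * c (traj f x u d \<tau>)) ` {..t})))"

definition value_fn :: "('x \<Rightarrow> 'u \<Rightarrow> 'd \<Rightarrow> 'x) \<Rightarrow> 'u set \<Rightarrow> 'd set \<Rightarrow> ('x \<Rightarrow> real) \<Rightarrow> ('x \<Rightarrow> real)
    \<Rightarrow> real \<Rightarrow> 'x \<Rightarrow> real" where
  "value_fn f U D r c \<gamma> x = (INF \<phi>\<in>nonanticipative U D. SUP u\<in>seqs U. payoff f r c \<gamma> x u (\<phi> u))"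

text \<open>Bellman backup (max/min over the compact sets rendered as Sup/Inf).\<close>
definition bellman :: "('x \<Rightarrow> 'u \<Rightarrow> 'd \<Rightarrow> 'x) \<Rightarrow> 'u set \<Rightarrow> 'd set \<Rightarrow> ('x \<Rightarrow> real) \<Rightarrow> ('x \<Rightarrow> real)
    \<Rightarrow> real \<Rightarrow> ('x \<Rightarrow> real) \<Rightarrow> 'x \<Rightarrow> real" where
  "bellman f U D r c \<gamma> W x = min (c x) (max (r x) (\<gamma> * (SUP u\<in>U. INF d\<in>D. W (f x u d))))"

definition bellman_cql :: "('x \<Rightarrow> 'u \<Rightarrow> 'd \<Rightarrow> 'x) \<Rightarrow> 'u set \<Rightarrow> 'd set \<Rightarrow> ('x \<Rightarrow> real) \<Rightarrow> ('x \<Rightarrow> real)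
    \<Rightarrow> real \<Rightarrow> real \<Rightarrow> ('x \<Rightarrow> real) \<Rightarrow> 'x \<Rightarrow> real" where
  "bellman_cql f U D r c \<gamma> lam W x = bellman f U D r c \<gamma> W x - lam"

end

theory Submission
  imports Defs
begin

(* The value function satisfies the dynamic programming principle V = B[V]. Splitting off the
   first move gives P x u d = min (c x) (max (r x) (gamma * P')) for the payoff of the shifted
   play; a non-anticipative strategy splits into a first reply and a tail strategy, and
   conversely a first reply spliced with epsilon-optimal strategies from the successor states is
   again non-anticipative.
   The backup is monotone and B[W + k] <= B[W] + gamma * k for k >= 0. Hence if W1 = B[W1] - a
   and W2 = B[W2] - b are bounded, the gap delta = sup (W1 - W2) satisfies
   delta <= gamma * max delta 0 + (b - a). For (W1, W2) = (V_CQL, V) this forces delta <= -lambda,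
   and for (V, V_CQL) it gives delta <= lambda / (1 - gamma). *)

lemma traj_Suc_shift:
  "traj f x u d (Suc t) = traj f (f x (u 0) (d 0)) (u \<circ> Suc) (d \<circ> Suc) t"
  by (induction t) auto

lemma Min_image_atMost_Suc:
  fixes g :: "nat \<Rightarrow> 'a::linorder"
  shows "Min (g ` {..Suc n}) = min (g 0) (Min ((g \<circ> Suc) ` {..n}))"
  by (simp add: atMost_Suc_eq_insert_0 image_comp)

lemma cSUP_nat_eq_max:
  fixes a :: "nat \<Rightarrow> 'a::conditionally_complete_linorder"
  assumes "bdd_above (range a)"
  shows "(SUP t. a t) = max (a 0) (SUP t. a (Suc t))"
proof -
  have "bdd_above (a ` range Suc)"
    using assms by (rule bdd_above_mono) auto
  then have "Sup (a ` insert 0 (range Suc)) = sup (a 0) (Sup (a ` range Suc))"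
    by (intro cSUP_insert) auto
  then show ?thesis
    by (simp flip: UNIV_nat_eq add: image_comp sup_max)
qed

lemma mono_continuous_cSUP:
  fixes h :: "'a::{linorder_topology,conditionally_complete_linorder}
      \<Rightarrow> 'b::{linorder_topology,conditionally_complete_linorder}"
  assumes "mono h" "continuous_on UNIV h" "A \<noteq> {}" "bdd_above (g ` A)"
  shows "h (SUP a\<in>A. g a) = (SUP a\<in>A. h (g a))"
proof -
  have "isCont h (SUP a\<in>A. g a)"
    using assms(2) by (simp add: continuous_on_eq_continuous_at)
  then have "continuous (at_left (SUP a\<in>A. g a)) h"
    by (rule continuous_at_imp_continuous_within)
  with continuous_at_Sup_mono[OF assms(1)] assms(3,4) show ?thesis
    by (simp add: image_comp)
qed

lemma bdd_above_image_abs_le: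
  fixes g :: "'a \<Rightarrow> real"
  shows "(\<And>a. a \<in> A \<Longrightarrow> \<bar>g a\<bar> \<le> K) \<Longrightarrow> bdd_above (g ` A)"
  by (rule bdd_aboveI[of _ K]) (auto simp: abs_le_iff)

lemma bdd_below_image_abs_le:
  fixes g :: "'a \<Rightarrow> real"
  shows "(\<And>a. a \<in> A \<Longrightarrow> \<bar>g a\<bar> \<le> K) \<Longrightarrow> bdd_below (g ` A)"
  by (rule bdd_belowI[of _ "- K"]) (auto simp: abs_le_iff minus_le_iff)

lemma abs_cSUP_le:
  fixes g :: "'a \<Rightarrow> real"
  assumes "A \<noteq> {}" "\<And>a. a \<in> A \<Longrightarrow> \<bar>g a\<bar> \<le> K"
  shows "\<bar>SUP a\<in>A. g a\<bar> \<le> K"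
proof -
  obtain a where a: "a \<in> A" using assms(1) by blast
  have "- K \<le> g a" using assms(2)[OF a] by (simp add: abs_le_iff)
  also have "\<dots> \<le> (SUP a\<in>A. g a)" using a assms(2) by (intro cSUP_upper bdd_above_image_abs_le)
  finally have "- K \<le> (SUP a\<in>A. g a)" .
  moreover have "(SUP a\<in>A. g a) \<le> K"
    using assms by (intro cSUP_least) (auto simp: abs_le_iff)
  ultimately show ?thesis by simp
qed

lemma abs_cINF_le:
  fixes g :: "'a \<Rightarrow> real"
  assumes "A \<noteq> {}" "\<And>a. a \<in> A \<Longrightarrow> \<bar>g a\<bar> \<le> K"
  shows "\<bar>INF a\<in>A. g a\<bar> \<le> K"
proof -
  obtain a where a: "a \<in> A" using assms(1) by blast
  have "(INF a\<in>A. g a) \<le> g a" using a assms(2) by (intro cINF_lower bdd_below_image_abs_le)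
  also have "\<dots> \<le> K" using assms(2)[OF a] by (simp add: abs_le_iff)
  finally have "(INF a\<in>A. g a) \<le> K" .
  moreover have "- K \<le> (INF a\<in>A. g a)"
    using assms by (intro cINF_greatest) (auto simp: abs_le_iff minus_le_iff)
  ultimately show ?thesis by simp
qed

lemma le_max_div_of_le_discounted:
  fixes \<delta> \<gamma> s :: real
  assumes "\<delta> \<le> \<gamma> * max \<delta> 0 + s" "0 \<le> \<gamma>" "\<gamma> < 1"
  shows "\<delta> \<le> max s (s / (1 - \<gamma>))"
proof (cases "\<delta> \<le> 0")
  case False
  then have "\<delta> * (1 - \<gamma>) \<le> s" using assms(1) by (simp add: algebra_simps)
  then have "\<delta> \<le> s / (1 - \<gamma>)" using assms(3) by (simp add: pos_le_divide_eq)
  then show ?thesis by simp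
qed (use assms(1) in simp)

lemma in_seqs_iff: "s \<in> seqs A \<longleftrightarrow> (\<forall>t. s t \<in> A)"
  by (simp add: seqs_def)

lemma case_nat_in_seqs: "a \<in> A \<Longrightarrow> s \<in> seqs A \<Longrightarrow> case_nat a s \<in> seqs A"
  by (simp add: in_seqs_iff split: nat.split)

lemma comp_Suc_in_seqs: "s \<in> seqs A \<Longrightarrow> s \<circ> Suc \<in> seqs A"
  by (simp add: in_seqs_iff)

lemma nonanticipative_in_seqs:
  "\<phi> \<in> nonanticipative U D \<Longrightarrow> u \<in> seqs U \<Longrightarrow> \<phi> u \<in> seqs D"
  by (simp add: nonanticipative_def)

lemma nonanticipative_agree:
  assumes "\<phi> \<in> nonanticipative U D" "u \<in> seqs U" "u' \<in> seqs U"
    and "\<And>s. s \<le> t \<Longrightarrow> u s = u' s"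
  shows "\<phi> u t = \<phi> u' t"
  using assms unfolding nonanticipative_def by blast

lemma nonanticipative_nonempty: "D \<noteq> {} \<Longrightarrow> nonanticipative U D \<noteq> {}"
proof -
  assume "D \<noteq> {}"
  then obtain d where "d \<in> D" by blast
  then have "(\<lambda>_ _. d) \<in> nonanticipative U D"
    by (simp add: nonanticipative_def in_seqs_iff)
  then show ?thesis by blast
qed

lemma nonanticipative_tail:
  assumes \<phi>: "\<phi> \<in> nonanticipative U D" and u0: "u0 \<in> U"
  shows "(\<lambda>v. \<phi> (case_nat u0 v) \<circ> Suc) \<in> nonanticipative U D"
  unfolding nonanticipative_def
proof (intro CollectI conjI ballI allI impI)
  fix v assume "v \<in> seqs U"
  then show "\<phi> (case_nat u0 v) \<circ> Suc \<in> seqs D"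
    by (intro comp_Suc_in_seqs nonanticipative_in_seqs[OF \<phi>] case_nat_in_seqs u0)
next
  fix v v' T t
  assume v: "v \<in> seqs U" and v': "v' \<in> seqs U" and agree: "\<forall>t\<le>T. v t = v' t" and "t \<le> T"
  have "case_nat u0 v s = case_nat u0 v' s" if "s \<le> Suc t" for s
    using that agree \<open>t \<le> T\<close> by (cases s) simp_all
  then have "\<phi> (case_nat u0 v) (Suc t) = \<phi> (case_nat u0 v') (Suc t)"
    by (intro nonanticipative_agree[OF \<phi>] case_nat_in_seqs u0 v v')
  then show "(\<phi> (case_nat u0 v) \<circ> Suc) t = (\<phi> (case_nat u0 v') \<circ> Suc) t"
    by simp
qed

lemma nonanticipative_case_nat:
  assumes d0: "\<And>u0. u0 \<in> U \<Longrightarrow> d0 u0 \<in> D"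
    and \<psi>: "\<And>u0. u0 \<in> U \<Longrightarrow> \<psi> u0 \<in> nonanticipative U D"
  shows "(\<lambda>u. case_nat (d0 (u 0)) (\<psi> (u 0) (u \<circ> Suc))) \<in> nonanticipative U D"
  unfolding nonanticipative_def
proof (intro CollectI conjI ballI allI impI)
  fix u assume u: "u \<in> seqs U"
  then have "u 0 \<in> U" by (simp add: in_seqs_iff)
  with u show "case_nat (d0 (u 0)) (\<psi> (u 0) (u \<circ> Suc)) \<in> seqs D"
    by (intro case_nat_in_seqs d0 nonanticipative_in_seqs[OF \<psi>] comp_Suc_in_seqs)
next
  fix u u' T t
  assume u: "u \<in> seqs U" and u': "u' \<in> seqs U" and agree: "\<forall>t\<le>T. u t = u' t" and "t \<le> T"
  have first: "u 0 = u' 0" using agree by simp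
  show "case_nat (d0 (u 0)) (\<psi> (u 0) (u \<circ> Suc)) t = case_nat (d0 (u' 0)) (\<psi> (u' 0) (u' \<circ> Suc)) t"
  proof (cases t)
    case (Suc s)
    have "u 0 \<in> U" using u by (simp add: in_seqs_iff)
    moreover have "(u \<circ> Suc) i = (u' \<circ> Suc) i" if "i \<le> s" for i
      using that agree \<open>t \<le> T\<close> Suc by simp
    ultimately have "\<psi> (u 0) (u \<circ> Suc) s = \<psi> (u 0) (u' \<circ> Suc) s"
      by (intro nonanticipative_agree[OF \<psi>] comp_Suc_in_seqs u u')
    then show ?thesis using Suc first by simp
  qed (simp add: first)
qed

locale reach_avoid_game =
  fixes f :: "'x \<Rightarrow> 'u \<Rightarrow> 'd \<Rightarrow> 'x" and U :: "'u set" and D :: "'d set"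
    and r c :: "'x \<Rightarrow> real" and \<gamma> M :: real
  assumes U_nonempty: "U \<noteq> {}" and D_nonempty: "D \<noteq> {}"
    and abs_r_le: "\<bar>r x\<bar> \<le> M" and abs_c_le: "\<bar>c x\<bar> \<le> M"
    and discount_nonneg: "0 \<le> \<gamma>" and discount_le_one: "\<gamma> \<le> 1"
begin

abbreviation "P \<equiv> payoff f r c \<gamma>"
abbreviation "V \<equiv> value_fn f U D r c \<gamma>"
abbreviation "\<Phi> \<equiv> nonanticipative U D"

definition step :: "'x \<Rightarrow> real \<Rightarrow> real" where
  "step x z = min (c x) (max (r x) (\<gamma> * z))"

lemma bellman_eq_step: "bellman f U D r c \<gamma> W x = step x (SUP u\<in>U. INF d\<in>D. W (f x u d))"
  by (simp add: bellman_def step_def)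

lemma step_mono: "a \<le> b \<Longrightarrow> step x a \<le> step x b"
  unfolding step_def
  by (intro min.mono max.mono mult_left_mono order_refl discount_nonneg)

lemma step_add_le:
  assumes "0 \<le> k"
  shows "step x (z + k) \<le> step x z + \<gamma> * k"
  using mult_nonneg_nonneg[OF discount_nonneg assms]
  unfolding step_def distrib_left by linarith

lemma step_cSUP:
  assumes "A \<noteq> {}" "bdd_above (g ` A)"
  shows "step x (SUP a\<in>A. g a) = (SUP a\<in>A. step x (g a))"
proof (rule mono_continuous_cSUP[OF _ _ assms])
  show "mono (step x)" by (simp add: monoI step_mono)
  show "continuous_on UNIV (step x)" unfolding step_def by (intro continuous_intros)
qed

definition payoff_term :: "'x \<Rightarrow> (nat \<Rightarrow> 'u) \<Rightarrow> (nat \<Rightarrow> 'd) \<Rightarrow> nat \<Rightarrow> real" where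
  "payoff_term x u d t = min (\<gamma> ^ t * r (traj f x u d t))
      (Min ((\<lambda>\<tau>. \<gamma> ^ \<tau> * c (traj f x u d \<tau>)) ` {..t}))"

lemma payoff_eq_SUP: "P x u d = (SUP t. payoff_term x u d t)"
  by (simp add: payoff_def payoff_term_def)

lemma abs_discounted_le: "\<bar>\<gamma> ^ t * a\<bar> \<le> \<bar>a\<bar>"
  using discount_nonneg discount_le_one
  by (simp add: abs_mult mult_left_le_one_le power_le_one)

lemma abs_payoff_term_le: "\<bar>payoff_term x u d t\<bar> \<le> M"
proof -
  let ?C = "(\<lambda>\<tau>. \<gamma> ^ \<tau> * c (traj f x u d \<tau>)) ` {..t}"
  have "Min ?C \<in> ?C" by (intro Min_in) auto
  then obtain \<tau> where "Min ?C = \<gamma> ^ \<tau> * c (traj f x u d \<tau>)" by blast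
  then have "\<bar>Min ?C\<bar> \<le> M"
    using order_trans[OF abs_discounted_le abs_c_le] by simp
  moreover have "\<bar>\<gamma> ^ t * r (traj f x u d t)\<bar> \<le> M"
    by (rule order_trans[OF abs_discounted_le abs_r_le])
  ultimately show ?thesis
    unfolding payoff_term_def by (metis min_def)
qed

lemma payoff_term_Suc:
  "payoff_term x u d (Suc t) = min (c x) (\<gamma> * payoff_term (f x (u 0) (d 0)) (u \<circ> Suc) (d \<circ> Suc) t)"
proof -
  define y where "y = f x (u 0) (d 0)"
  let ?C = "\<lambda>\<tau>. \<gamma> ^ \<tau> * c (traj f y (u \<circ> Suc) (d \<circ> Suc) \<tau>)"
  have shift: "traj f x u d (Suc \<tau>) = traj f y (u \<circ> Suc) (d \<circ> Suc) \<tau>" for \<tau>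
    unfolding y_def by (rule traj_Suc_shift)
  have "Min ((\<lambda>\<tau>. \<gamma> ^ \<tau> * c (traj f x u d \<tau>)) ` {..Suc t})
      = min (c x) (Min (((*) \<gamma> \<circ> ?C) ` {..t}))"
    by (simp add: Min_image_atMost_Suc shift comp_def mult.assoc del: traj.simps(2))
  also have "Min (((*) \<gamma> \<circ> ?C) ` {..t}) = \<gamma> * Min (?C ` {..t})"
  proof -
    have "mono ((*) \<gamma>)" by (intro monoI mult_left_mono discount_nonneg)
    then show ?thesis by (simp add: mono_Min_commute image_comp)
  qed
  finally show ?thesis
    using discount_nonneg
    by (simp add: payoff_term_def shift y_def[symmetric] min_mult_distrib_left mult.assoc
        ac_simps del: traj.simps)
qed

lemma payoff_recursion:
  "P x u d = step x (P (f x (u 0) (d 0)) (u \<circ> Suc) (d \<circ> Suc))"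
proof -
  define y where "y = f x (u 0) (d 0)"
  have bdd: "bdd_above (range (payoff_term y' u' d'))" for y' u' d'
    using abs_payoff_term_le by (intro bdd_above_image_abs_le)
  have first: "payoff_term x u d 0 = min (r x) (c x)"
    by (simp add: payoff_term_def)
  have "P x u d = max (payoff_term x u d 0) (SUP t. payoff_term x u d (Suc t))"
    unfolding payoff_eq_SUP by (rule cSUP_nat_eq_max[OF bdd])
  also have "(SUP t. payoff_term x u d (Suc t))
      = (SUP t. min (c x) (\<gamma> * payoff_term y (u \<circ> Suc) (d \<circ> Suc) t))"
    by (simp add: payoff_term_Suc y_def)
  also have "\<dots> = min (c x) (\<gamma> * P y (u \<circ> Suc) (d \<circ> Suc))"
    unfolding payoff_eq_SUP
  proof (rule mono_continuous_cSUP[symmetric, OF _ _ UNIV_not_empty bdd])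
    show "mono (\<lambda>z. min (c x) (\<gamma> * z))"
      by (intro monoI min.mono order_refl mult_left_mono discount_nonneg)
    show "continuous_on UNIV (\<lambda>z. min (c x) (\<gamma> * z))"
      by (intro continuous_intros)
  qed
  finally show ?thesis
    using first unfolding step_def y_def by linarith
qed

lemma abs_payoff_le: "\<bar>P x u d\<bar> \<le> M"
  unfolding payoff_eq_SUP by (intro abs_cSUP_le abs_payoff_term_le) simp

definition strategy_payoff :: "'x \<Rightarrow> ((nat \<Rightarrow> 'u) \<Rightarrow> (nat \<Rightarrow> 'd)) \<Rightarrow> real" where
  "strategy_payoff x \<phi> = (SUP u\<in>seqs U. P x u (\<phi> u))"

lemma value_eq_INF: "V x = (INF \<phi>\<in>\<Phi>. strategy_payoff x \<phi>)"
  by (simp add: value_fn_def strategy_payoff_def)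

lemma seqs_U_nonempty: "seqs U \<noteq> {}"
  using U_nonempty by (auto simp: in_seqs_iff)

lemma abs_strategy_payoff_le: "\<bar>strategy_payoff x \<phi>\<bar> \<le> M"
  unfolding strategy_payoff_def by (intro abs_cSUP_le seqs_U_nonempty abs_payoff_le)

lemma abs_value_le: "\<bar>V x\<bar> \<le> M"
  unfolding value_eq_INF
  by (intro abs_cINF_le nonanticipative_nonempty D_nonempty abs_strategy_payoff_le)

lemma payoff_le_strategy_payoff: "u \<in> seqs U \<Longrightarrow> P x u (\<phi> u) \<le> strategy_payoff x \<phi>"
  unfolding strategy_payoff_def by (intro cSUP_upper bdd_above_image_abs_le[where K = M] abs_payoff_le)

lemma value_le_strategy_payoff: "\<phi> \<in> \<Phi> \<Longrightarrow> V x \<le> strategy_payoff x \<phi>"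
  unfolding value_eq_INF by (intro cINF_lower bdd_below_image_abs_le[where K = M] abs_strategy_payoff_le)

lemma step_value_le_strategy_payoff:
  assumes \<phi>: "\<phi> \<in> \<Phi>" and u0: "u0 \<in> U"
  shows "step x (V (f x u0 (\<phi> (\<lambda>_. u0) 0))) \<le> strategy_payoff x \<phi>"
proof -
  define \<psi> where "\<psi> = (\<lambda>v. \<phi> (case_nat u0 v) \<circ> Suc)"
  define y where "y = f x u0 (\<phi> (\<lambda>_. u0) 0)"
  have "\<psi> \<in> \<Phi>"
    unfolding \<psi>_def using \<phi> u0 by (rule nonanticipative_tail)
  then have "step x (V y) \<le> step x (strategy_payoff y \<psi>)"
    by (intro step_mono value_le_strategy_payoff)
  also have "\<dots> = (SUP v\<in>seqs U. step x (P y v (\<psi> v)))"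
    unfolding strategy_payoff_def
    by (intro step_cSUP seqs_U_nonempty bdd_above_image_abs_le[where K = M] abs_payoff_le)
  also have "\<dots> \<le> strategy_payoff x \<phi>"
  proof (rule cSUP_least[OF seqs_U_nonempty])
    fix v assume v: "v \<in> seqs U"
    have const: "(\<lambda>_. u0) \<in> seqs U" using u0 by (simp add: in_seqs_iff)
    have "\<phi> (case_nat u0 v) 0 = \<phi> (\<lambda>_. u0) 0"
      using u0 v by (intro nonanticipative_agree[OF \<phi> case_nat_in_seqs const]) auto
    then have "step x (P y v (\<psi> v)) = P x (case_nat u0 v) (\<phi> (case_nat u0 v))"
      by (simp add: payoff_recursion[of x "case_nat u0 v"] \<psi>_def y_def comp_def)
    also have "\<dots> \<le> strategy_payoff x \<phi>"
      using u0 v by (intro payoff_le_strategy_payoff case_nat_in_seqs)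
    finally show "step x (P y v (\<psi> v)) \<le> strategy_payoff x \<phi>" .
  qed
  finally show ?thesis unfolding y_def .
qed

lemma bellman_value_le: "bellman f U D r c \<gamma> V x \<le> V x"
proof -
  have "bellman f U D r c \<gamma> V x = (SUP u\<in>U. step x (INF d\<in>D. V (f x u d)))"
    unfolding bellman_eq_step
    by (intro step_cSUP U_nonempty bdd_above_image_abs_le[where K = M] abs_cINF_le D_nonempty abs_value_le)
  also have "\<dots> \<le> V x"
    unfolding value_eq_INF[of x]
  proof (rule cINF_greatest[OF nonanticipative_nonempty[OF D_nonempty]],
      rule cSUP_least[OF U_nonempty])
    fix \<phi> u0 assume \<phi>: "\<phi> \<in> \<Phi>" and u0: "u0 \<in> U"
    have "(\<lambda>_. u0) \<in> seqs U" using u0 by (simp add: in_seqs_iff)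
    then have "\<phi> (\<lambda>_. u0) 0 \<in> D"
      using nonanticipative_in_seqs[OF \<phi>] by (simp add: in_seqs_iff)
    then have "step x (INF d\<in>D. V (f x u0 d)) \<le> step x (V (f x u0 (\<phi> (\<lambda>_. u0) 0)))"
      by (intro step_mono cINF_lower bdd_below_image_abs_le[where K = M] abs_value_le)
    also have "\<dots> \<le> strategy_payoff x \<phi>"
      using \<phi> u0 by (rule step_value_le_strategy_payoff)
    finally show "step x (INF d\<in>D. V (f x u0 d)) \<le> strategy_payoff x \<phi>" .
  qed
  finally show ?thesis .
qed

lemma strategy_payoff_case_nat_le:
  assumes "\<And>u0. u0 \<in> U \<Longrightarrow> strategy_payoff (f x u0 (d0 u0)) (\<psi> u0) \<le> z"
  shows "strategy_payoff x (\<lambda>u. case_nat (d0 (u 0)) (\<psi> (u 0) (u \<circ> Suc))) \<le> step x z"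
  unfolding strategy_payoff_def
proof (rule cSUP_least[OF seqs_U_nonempty])
  fix u assume u: "u \<in> seqs U"
  let ?y = "f x (u 0) (d0 (u 0))"
  have "P x u (case_nat (d0 (u 0)) (\<psi> (u 0) (u \<circ> Suc))) = step x (P ?y (u \<circ> Suc) (\<psi> (u 0) (u \<circ> Suc)))"
    by (simp add: payoff_recursion[of x u] comp_def)
  also have "\<dots> \<le> step x (strategy_payoff ?y (\<psi> (u 0)))"
    using u by (intro step_mono payoff_le_strategy_payoff comp_Suc_in_seqs)
  also have "\<dots> \<le> step x z"
    using u by (intro step_mono assms) (simp add: in_seqs_iff)
  finally show "P x u (case_nat (d0 (u 0)) (\<psi> (u 0) (u \<circ> Suc))) \<le> step x z" .
qed

lemma value_le_bellman: "V x \<le> bellman f U D r c \<gamma> V x"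
proof (rule field_le_epsilon)
  fix \<epsilon> :: real assume "0 < \<epsilon>"
  define I where "I u0 = (INF d\<in>D. V (f x u0 d))" for u0
  define S where "S = (SUP u0\<in>U. I u0)"
  have "\<exists>d\<in>D. V (f x u0 d) < I u0 + \<epsilon> / 2" for u0
    using cInf_lessD[of "(\<lambda>d. V (f x u0 d)) ` D" "I u0 + \<epsilon> / 2"] D_nonempty \<open>0 < \<epsilon>\<close>
    unfolding I_def by auto
  then obtain d0 where d0: "\<And>u0. d0 u0 \<in> D" "\<And>u0. V (f x u0 (d0 u0)) < I u0 + \<epsilon> / 2"
    by metis
  have "\<exists>\<psi>\<in>\<Phi>. strategy_payoff y \<psi> < V y + \<epsilon> / 2" for y
    using cInf_lessD[of "strategy_payoff y ` \<Phi>" "V y + \<epsilon> / 2"]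
      nonanticipative_nonempty[OF D_nonempty] \<open>0 < \<epsilon>\<close>
    unfolding value_eq_INF[of y] by auto
  then obtain \<psi> where \<psi>: "\<And>y. \<psi> y \<in> \<Phi>" "\<And>y. strategy_payoff y (\<psi> y) < V y + \<epsilon> / 2"
    by metis
  define \<phi> where "\<phi> = (\<lambda>u. case_nat (d0 (u 0)) (\<psi> (f x (u 0) (d0 (u 0))) (u \<circ> Suc)))"
  have "\<phi> \<in> \<Phi>"
    unfolding \<phi>_def using d0(1) \<psi>(1) by (rule nonanticipative_case_nat)
  then have "V x \<le> strategy_payoff x \<phi>"
    by (rule value_le_strategy_payoff)
  also have "\<dots> \<le> step x (S + \<epsilon>)"
    unfolding \<phi>_def
  proof (rule strategy_payoff_case_nat_le)
    fix u0 assume "u0 \<in> U"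
    then have "I u0 \<le> S"
      unfolding S_def I_def
      by (intro cSUP_upper bdd_above_image_abs_le[where K = M] abs_cINF_le D_nonempty abs_value_le)
    then show "strategy_payoff (f x u0 (d0 u0)) (\<psi> (f x u0 (d0 u0))) \<le> S + \<epsilon>"
      using \<psi>(2)[of "f x u0 (d0 u0)"] d0(2)[of u0] by linarith
  qed
  also have "\<dots> \<le> step x S + \<gamma> * \<epsilon>"
    using \<open>0 < \<epsilon>\<close> by (intro step_add_le) simp
  also have "\<dots> \<le> bellman f U D r c \<gamma> V x + \<epsilon>"
    using \<open>0 < \<epsilon>\<close> discount_le_one
    by (simp add: bellman_eq_step S_def I_def mult_left_le_one_le)
  finally show "V x \<le> bellman f U D r c \<gamma> V x + \<epsilon>" .
qed

lemma bellman_value_eq: "bellman f U D r c \<gamma> V x = V x"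
  using bellman_value_le value_le_bellman by (rule antisym)

lemma bellman_le_add:
  assumes "bounded (range W1)" "bounded (range W2)"
    and le: "\<And>y. W1 y \<le> W2 y + k" and "0 \<le> k"
  shows "bellman f U D r c \<gamma> W1 x \<le> bellman f U D r c \<gamma> W2 x + \<gamma> * k"
proof -
  obtain K1 K2 where K: "\<And>y. \<bar>W1 y\<bar> \<le> K1" "\<And>y. \<bar>W2 y\<bar> \<le> K2"
    using assms(1,2) by (auto simp: bounded_iff)
  define I1 where "I1 u = (INF d\<in>D. W1 (f x u d))" for u
  define I2 where "I2 u = (INF d\<in>D. W2 (f x u d))" for u
  have "I1 u \<le> I2 u + k" for u
  proof -
    have "I1 u - k \<le> I2 u"
      unfolding I2_def
    proof (rule cINF_greatest[OF D_nonempty])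
      fix d assume "d \<in> D"
      then have "I1 u \<le> W1 (f x u d)"
        unfolding I1_def by (intro cINF_lower bdd_below_image_abs_le[where K = K1] K(1))
      then show "I1 u - k \<le> W2 (f x u d)" using le[of "f x u d"] by linarith
    qed
    then show ?thesis by simp
  qed
  moreover have "I2 u \<le> (SUP u\<in>U. I2 u)" if "u \<in> U" for u
    using that unfolding I2_def
    by (intro cSUP_upper bdd_above_image_abs_le[where K = K2] abs_cINF_le D_nonempty K(2))
  ultimately have "(SUP u\<in>U. I1 u) \<le> (SUP u\<in>U. I2 u) + k"
    by (intro cSUP_least U_nonempty) (meson add_right_mono order_trans)
  then have "step x (SUP u\<in>U. I1 u) \<le> step x ((SUP u\<in>U. I2 u) + k)"
    by (rule step_mono)
  also have "\<dots> \<le> step x (SUP u\<in>U. I2 u) + \<gamma> * k"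
    using \<open>0 \<le> k\<close> by (rule step_add_le)
  finally show ?thesis
    unfolding bellman_eq_step I1_def I2_def .
qed

lemma bellman_shifted_fixed_points_diff_le:
  assumes "\<gamma> < 1" "bounded (range W1)" "bounded (range W2)"
    and fix1: "\<And>y. W1 y = bellman f U D r c \<gamma> W1 y - a"
    and fix2: "\<And>y. W2 y = bellman f U D r c \<gamma> W2 y - b"
  shows "W1 x - W2 x \<le> max (b - a) ((b - a) / (1 - \<gamma>))"
proof -
  define \<delta> where "\<delta> = (SUP y. W1 y - W2 y)"
  obtain K1 K2 where K: "\<And>y. \<bar>W1 y\<bar> \<le> K1" "\<And>y. \<bar>W2 y\<bar> \<le> K2"
    using assms(2,3) by (auto simp: bounded_iff)
  have diff_le: "W1 y - W2 y \<le> \<delta>" for y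
    unfolding \<delta>_def
    by (intro cSUP_upper bdd_above_image_abs_le[where K = "K1 + K2"] UNIV_I)
      (meson K abs_triangle_ineq4 add_mono order_trans)
  have "W1 y - W2 y \<le> \<gamma> * max \<delta> 0 + (b - a)" for y
  proof -
    have "W1 z \<le> W2 z + max \<delta> 0" for z
      using diff_le[of z] by linarith
    then have "bellman f U D r c \<gamma> W1 y \<le> bellman f U D r c \<gamma> W2 y + \<gamma> * max \<delta> 0"
      using assms(2,3) by (intro bellman_le_add) auto
    then show ?thesis using fix1[of y] fix2[of y] by linarith
  qed
  then have "\<delta> \<le> \<gamma> * max \<delta> 0 + (b - a)"
    unfolding \<delta>_def by (intro cSUP_least) auto
  then have "\<delta> \<le> max (b - a) ((b - a) / (1 - \<gamma>))"
    using discount_nonneg \<open>\<gamma> < 1\<close> by (rule le_max_div_of_le_discounted)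
  then show ?thesis using diff_le[of x] by linarith
qed

end

theorem theorem4:
  fixes f :: "real^'n \<Rightarrow> real^'m \<Rightarrow> real^'l \<Rightarrow> real^'n"
    and U :: "(real^'m) set" and D :: "(real^'l) set"
    and r c :: "real^'n \<Rightarrow> real"
    and \<gamma> lam :: real
    and Vcql :: "real^'n \<Rightarrow> real"
  assumes "compact U" "U \<noteq> {}" "compact D" "D \<noteq> {}"
    and "\<exists>L. \<forall>u\<in>U. \<forall>d\<in>D. L-lipschitz_on UNIV (\<lambda>x. f x u d)"
    and "bounded (range r)" "\<exists>L. L-lipschitz_on UNIV r"
    and "bounded (range c)" "\<exists>L. L-lipschitz_on UNIV c"
    and "0 \<le> \<gamma>" "\<gamma> < 1" "0 \<le> lam"
    and "bounded (range Vcql)"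
    and "\<forall>x. Vcql x = bellman_cql f U D r c \<gamma> lam Vcql x"
  shows "\<forall>x. value_fn f U D r c \<gamma> x - lam / (1 - \<gamma>) \<le> Vcql x
           \<and> Vcql x \<le> value_fn f U D r c \<gamma> x - lam"
proof -
  obtain M where "\<forall>z\<in>range r \<union> range c. norm z \<le> M"
    using assms(6,8) bounded_Un bounded_iff by metis
  then interpret reach_avoid_game f U D r c \<gamma> M
    using assms(2,4,10,11) by unfold_locales auto
  have V_fixed: "V y = bellman f U D r c \<gamma> V y - 0" for y
    by (simp add: bellman_value_eq)
  have Vcql_fixed: "Vcql y = bellman f U D r c \<gamma> Vcql y - lam" for y
    using assms(14) by (simp add: bellman_cql_def)
  have V_bounded: "bounded (range V)"
    using abs_value_le by (auto simp: bounded_iff)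
  have lam_le: "lam \<le> lam / (1 - \<gamma>)"
    using assms(10-12) by (simp add: le_divide_eq right_diff_distrib)
  show ?thesis
  proof
    fix x
    have "Vcql x - V x \<le> max (0 - lam) ((0 - lam) / (1 - \<gamma>))"
      using assms(11,13) V_bounded Vcql_fixed V_fixed
      by (rule bellman_shifted_fixed_points_diff_le)
    moreover have "V x - Vcql x \<le> max (lam - 0) ((lam - 0) / (1 - \<gamma>))"
      using assms(11) V_bounded assms(13) V_fixed Vcql_fixed
      by (rule bellman_shifted_fixed_points_diff_le)
    ultimately show "V x - lam / (1 - \<gamma>) \<le> Vcql x \<and> Vcql x \<le> V x - lam"
      using lam_le by (auto simp: max_def split: if_splits)
  qed
qed

end
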